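(* Let $q$ be a prime power and let $d,\tau,n,m$ be integers with $\lfloor (d-1)/2\rfloor\le\tau<d\le n\le m$. Let $\mathcal C\subseteq\mathbb F_{q^m}^n$ be any (not necessarily linear) code with minimum rank distance $d$. Then $$\ell=\max_{\mathbf r\in\mathbb F_{q^m}^n}|\mathcal C\cap\mathcal B_\tau(\mathbf r)|\ \le\ 1+\sum_{t=\lfloor (d-1)/2\rfloor+1}^{\tau}\frac{\binom{n}{2t+1-d}_q}{\binom{t}{2t+1-d}_q}\ \le\ 1+4\sum_{t=\lfloor (d-1)/2\rfloor+1}^{\tau}q^{(2t-d+1)(n-t)}$$ $$\le\ 1+4\Big(\tau-\big\lfloor\tfrac{d-1}{2}\big\rfloor\Big)\,q^{(2\tau-d+1)(n-\lfloor (d-1)/2\rfloor-1)}.$$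
   Context: Fixing a basis of $\mathbb F_{q^m}$ over $\mathbb F_q$, each vector $\mathbf x\in\mathbb F_{q^m}^n$ is identified with an $m\times n$ matrix over $\mathbb F_q$; $\mathrm{rk}(\mathbf x)$ is the rank of this matrix and the rank distance is $\mathrm{rk}(\mathbf x-\mathbf y)$. The minimum rank distance of $\mathcal C$ is $\min\{\mathrm{rk}(\mathbf c_1-\mathbf c_2):\mathbf c_1\ne\mathbf c_2\in\mathcal C\}$. $\mathcal B_\tau(\mathbf r)=\{\mathbf x:\mathrm{rk}(\mathbf x-\mathbf r)\le\tau\}$. The Gaussian binomial is $\binom{n}{r}_q=\prod_{i=0}^{r-1}\frac{q^n-q^i}{q^r-q^i}$. *)

theory Defs
  imports Complex_Main "Jordan_Normal_Form.DL_Rank"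
begin

text \<open>Vectors of F_{q^m}^n are identified (via a fixed F_q-basis of F_{q^m}) with
  m x n matrices over F_q. The rank of x is the rank of this matrix.\<close>

definition rk :: "nat \<Rightarrow> 'a::field mat \<Rightarrow> nat" where
  "rk m A = vec_space.rank m (A :: 'a mat)"

definition rank_dist :: "nat \<Rightarrow> 'a::field mat \<Rightarrow> 'a mat \<Rightarrow> nat" where
  "rank_dist m x y = rk m (x - y)"

definition min_rank_distance :: "nat \<Rightarrow> 'a::field mat set \<Rightarrow> nat \<Rightarrow> bool" where
  "min_rank_distance m C d \<longleftrightarrow>
     (\<exists>c1\<in>C. \<exists>c2\<in>C. c1 \<noteq> c2 \<and> rank_dist m c1 c2 = d) \<and>
     (\<forall>c1\<in>C. \<forall>c2\<in>C. c1 \<noteq> c2 \<longrightarrow> d \<le> rank_dist m c1 c2)"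

definition rank_ball :: "nat \<Rightarrow> nat \<Rightarrow> nat \<Rightarrow> 'a::field mat \<Rightarrow> 'a mat set" where
  "rank_ball m n \<tau> r = {x \<in> carrier_mat m n. rank_dist m x r \<le> \<tau>}"

definition gauss_binom :: "nat \<Rightarrow> nat \<Rightarrow> nat \<Rightarrow> real" where
  "gauss_binom q n r = (\<Prod>i<r. (real q ^ n - real q ^ i) / (real q ^ r - real q ^ i))"

end

theory Submission
  imports Defs "HOL-Library.Function_Algebras"
begin

text \<open>Identify each matrix c - r with its row space in F_q^n. A codeword c at rank distance
  exactly t from r gives a t-dimensional row space, which contains
  (q^t - 1)(q^t - q) \<dots> (q^t - q^(k-1)) ordered independent k-tuples. Taking k = 2t + 1 - d,
  no such tuple can lie in the row spaces of two distinct codewords, because the rows of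
  c - c' lie in the sum of these spaces and rank distance d forces their intersection to have
  dimension at most 2t - d. Comparing with the number of independent k-tuples in F_q^n bounds
  the number of such codewords by a ratio of Gaussian binomials, while rank subadditivity
  leaves room for at most one codeword within distance (d - 1) div 2. Finally, writing
  q^t - q^i = q^t (1 - q^(i - t)), each ratio is at most 4 q^(k(n - t)) because
  \<Prod>j \<ge> 1. (1 - 2^(-j)) \<ge> 1/4.\<close>

definition scale_fun :: "'a::field \<Rightarrow> (nat \<Rightarrow> 'a) \<Rightarrow> nat \<Rightarrow> 'a" where
  "scale_fun c f = (\<lambda>i. c * f i)"

text \<open>Matrices are compared through their row spaces, taken inside the space of sequences
  nat \<Rightarrow> 'a with pointwise scaling. The library rank is the dimension of the column space in
  F^m, whereas the counting below has to take place in the row space F^n (recall n \<le> m).\<close>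

interpretation fun_vs: vector_space "scale_fun :: 'a::field \<Rightarrow> _"
  by unfold_locales (auto simp: scale_fun_def fun_eq_iff algebra_simps)

lemma sum_fun_apply: "sum f A i = (\<Sum>a\<in>A. f a i)"
  by (induct A rule: infinite_finite_induct) auto

lemma scale_fun_apply: "scale_fun c f i = c * f i"
  by (simp add: scale_fun_def)

lemma two_le_card_field: "2 \<le> card (UNIV :: 'a::{field,finite} set)"
proof -
  have "card {0::'a, 1} \<le> card (UNIV :: 'a set)" by (rule card_mono) auto
  then show ?thesis by simp
qed

lemma fun_vs_span_eq_image:
  assumes "finite B"
  shows "fun_vs.span B = (\<lambda>u. \<Sum>v\<in>B. scale_fun (u v) v) ` (B \<rightarrow>\<^sub>E (UNIV :: 'a::field set))"
proof
  show "fun_vs.span B \<subseteq> (\<lambda>u. \<Sum>v\<in>B. scale_fun (u v) v) ` (B \<rightarrow>\<^sub>E UNIV)"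
  proof
    fix x assume "x \<in> fun_vs.span B"
    then obtain u where "x = (\<Sum>v\<in>B. scale_fun (u v) v)"
      using fun_vs.span_finite[OF assms] by auto
    also have "\<dots> = (\<Sum>v\<in>B. scale_fun (restrict u B v) v)" by simp
    finally show "x \<in> (\<lambda>u. \<Sum>v\<in>B. scale_fun (u v) v) ` (B \<rightarrow>\<^sub>E UNIV)"
      by (intro image_eqI[where x = "restrict u B"]) auto
  qed
qed (use fun_vs.span_finite[OF assms] in auto)

lemma finite_fun_vs_span:
  "finite B \<Longrightarrow> finite (fun_vs.span (B :: (nat \<Rightarrow> 'a::{field,finite}) set))"
  by (simp add: fun_vs_span_eq_image finite_PiE)

lemma card_fun_vs_span_independent:
  fixes B :: "(nat \<Rightarrow> 'a::{field,finite}) set"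
  assumes fin: "finite B" and ind: "fun_vs.independent B"
  shows "card (fun_vs.span B) = card (UNIV :: 'a set) ^ card B"
proof -
  let ?g = "\<lambda>u. \<Sum>v\<in>B. scale_fun (u v) v"
  have inj: "inj_on ?g (B \<rightarrow>\<^sub>E UNIV)"
  proof
    fix u w assume u: "u \<in> B \<rightarrow>\<^sub>E UNIV" and w: "w \<in> B \<rightarrow>\<^sub>E UNIV" and eq: "?g u = ?g w"
    have "(\<Sum>v\<in>B. scale_fun (u v - w v) v) = ?g u - ?g w"
      by (simp add: fun_vs.scale_left_diff_distrib sum_subtractf)
    with eq have "(\<Sum>v\<in>B. scale_fun (u v - w v) v) = 0" by simp
    then have "\<forall>v\<in>B. u v - w v = 0"
      using fun_vs.independentD[OF ind fin order_refl, of "\<lambda>v. u v - w v"] by blast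
    then show "u = w" by (intro PiE_ext[OF u w]) simp
  qed
  have "card (fun_vs.span B) = card (B \<rightarrow>\<^sub>E (UNIV :: 'a set))"
    unfolding fun_vs_span_eq_image[OF fin] by (rule card_image[OF inj])
  then show ?thesis by (simp add: card_PiE fin)
qed

lemma card_fun_vs_span:
  fixes P :: "(nat \<Rightarrow> 'a::{field,finite}) set"
  assumes "finite P"
  shows "card (fun_vs.span P) = card (UNIV :: 'a set) ^ fun_vs.dim P"
proof -
  obtain B where B: "B \<subseteq> P" "fun_vs.independent B" "P \<subseteq> fun_vs.span B" "card B = fun_vs.dim P"
    using fun_vs.basis_exists by blast
  have "fun_vs.span B = fun_vs.span P"
    using B by (metis fun_vs.span_mono fun_vs.span_span subset_antisym)
  then show ?thesis
    using card_fun_vs_span_independent[of B] B assms finite_subset by metis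
qed

text \<open>Grassmann's inequality dim (U + W) + dim (U \<inter> W) \<le> dim U + dim W, with the intersection
  represented by an independent subset X.\<close>

lemma fun_vs_dim_plus_card_common_le:
  fixes P Q :: "(nat \<Rightarrow> 'a::field) set"
  assumes "finite P" "finite Q" "X \<subseteq> fun_vs.span P" "X \<subseteq> fun_vs.span Q"
    and "fun_vs.independent X" and "R \<subseteq> fun_vs.span (P \<union> Q)"
  shows "fun_vs.dim R + card X \<le> fun_vs.dim P + fun_vs.dim Q"
proof -
  obtain BP where BP: "X \<subseteq> BP" "BP \<subseteq> fun_vs.span P" "fun_vs.independent BP"
      "fun_vs.span P \<subseteq> fun_vs.span BP"
    using fun_vs.maximal_independent_subset_extend assms(3,5) by blast
  obtain BQ where BQ: "X \<subseteq> BQ" "BQ \<subseteq> fun_vs.span Q" "fun_vs.independent BQ"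
      "fun_vs.span Q \<subseteq> fun_vs.span BQ"
    using fun_vs.maximal_independent_subset_extend assms(4,5) by blast
  have fin: "finite BP" "finite BQ"
    using fun_vs.independent_span_bound BP(2,3) BQ(2,3) assms(1,2) by auto
  have card: "card BP = fun_vs.dim P" "card BQ = fun_vs.dim Q"
    using fun_vs.basis_card_eq_dim[OF BP(2,4,3)] fun_vs.basis_card_eq_dim[OF BQ(2,4,3)] by auto
  have "P \<union> Q \<subseteq> fun_vs.span (BP \<union> BQ)"
    using BP(4) BQ(4) fun_vs.span_superset[of P] fun_vs.span_superset[of Q]
      fun_vs.span_mono[of BP "BP \<union> BQ"] fun_vs.span_mono[of BQ "BP \<union> BQ"] by blast
  then have "fun_vs.span (P \<union> Q) \<subseteq> fun_vs.span (BP \<union> BQ)"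
    by (rule fun_vs.span_minimal[OF _ fun_vs.subspace_span])
  with assms(6) have "R \<subseteq> fun_vs.span (BP \<union> BQ)" by (rule order_trans)
  then have "fun_vs.dim R \<le> card (BP \<union> BQ)"
    using fin by (intro fun_vs.dim_le_card) auto
  moreover have "card (BP \<union> BQ) + card (BP \<inter> BQ) = card BP + card BQ"
    using card_Un_Int[OF fin] by simp
  moreover have "card X \<le> card (BP \<inter> BQ)"
    using BP(1) BQ(1) fin by (intro card_mono) auto
  ultimately show ?thesis using card by linarith
qed

definition indep_lists :: "(nat \<Rightarrow> 'a::field) set \<Rightarrow> nat \<Rightarrow> (nat \<Rightarrow> 'a) list set" where
  "indep_lists V k =
     {xs. length xs = k \<and> distinct xs \<and> set xs \<subseteq> V \<and> fun_vs.independent (set xs)}"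

lemma indep_lists_mono: "V \<subseteq> W \<Longrightarrow> indep_lists V k \<subseteq> indep_lists W k"
  unfolding indep_lists_def by auto

lemma indep_lists_0: "indep_lists V 0 = {[]}"
  unfolding indep_lists_def using fun_vs.independent_empty by auto

lemma indep_lists_Suc:
  "indep_lists V (Suc k) =
     (\<lambda>(xs, v). v # xs) ` (SIGMA xs:indep_lists V k. V - fun_vs.span (set xs))"
proof (intro equalityI subsetI)
  fix ys assume "ys \<in> indep_lists V (Suc k)"
  then obtain v xs where ys: "ys = v # xs" and "length xs = k" "distinct (v # xs)"
    "set (v # xs) \<subseteq> V" "fun_vs.independent (insert v (set xs))"
    unfolding indep_lists_def by (cases ys) auto
  moreover have "fun_vs.independent (set xs) \<and> v \<notin> fun_vs.span (set xs)"
    using calculation fun_vs.independent_insert by (metis distinct.simps(2))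
  ultimately show "ys \<in> (\<lambda>(xs, v). v # xs) ` (SIGMA xs:indep_lists V k. V - fun_vs.span (set xs))"
    unfolding indep_lists_def by force
next
  fix ys assume "ys \<in> (\<lambda>(xs, v). v # xs) ` (SIGMA xs:indep_lists V k. V - fun_vs.span (set xs))"
  then obtain xs v where "ys = v # xs" "xs \<in> indep_lists V k" "v \<in> V" "v \<notin> fun_vs.span (set xs)"
    by auto
  then show "ys \<in> indep_lists V (Suc k)"
    unfolding indep_lists_def using fun_vs.span_base fun_vs.independent_insertI by fastforce
qed

lemma finite_indep_lists_span:
  fixes P :: "(nat \<Rightarrow> 'a::{field,finite}) set"
  assumes "finite P"
  shows "finite (indep_lists (fun_vs.span P) k)"
  by (rule finite_subset[of _ "{xs. set xs \<subseteq> fun_vs.span P \<and> length xs = k}"])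
    (auto simp: indep_lists_def finite_lists_length_eq finite_fun_vs_span[OF assms])

lemma card_indep_lists:
  fixes P :: "(nat \<Rightarrow> 'a::{field,finite}) set"
  assumes "finite P"
  shows "card (indep_lists (fun_vs.span P) k) =
           (\<Prod>i<k. card (UNIV :: 'a set) ^ fun_vs.dim P - card (UNIV :: 'a set) ^ i)"
proof (induction k)
  case 0
  then show ?case by (simp add: indep_lists_0)
next
  case (Suc k)
  let ?V = "fun_vs.span P" and ?q = "card (UNIV :: 'a set)"
  have fin_V: "finite ?V" using assms by (rule finite_fun_vs_span)
  have card_diff: "card (?V - fun_vs.span (set xs)) = ?q ^ fun_vs.dim P - ?q ^ k"
    if "xs \<in> indep_lists ?V k" for xs
  proof -
    have "fun_vs.span (set xs) \<subseteq> ?V"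
      using that unfolding indep_lists_def by (intro fun_vs.span_minimal[OF _ fun_vs.subspace_span]) auto
    moreover have "card (fun_vs.span (set xs)) = ?q ^ k"
      using that card_fun_vs_span_independent[of "set xs"]
      unfolding indep_lists_def by (simp add: distinct_card)
    ultimately show ?thesis
      using card_fun_vs_span[OF assms] fin_V by (simp add: card_Diff_subset finite_subset)
  qed
  have "inj_on (\<lambda>(xs, v). v # xs) (SIGMA xs:indep_lists ?V k. ?V - fun_vs.span (set xs))"
    by (auto simp: inj_on_def)
  then have "card (indep_lists ?V (Suc k)) =
      card (SIGMA xs:indep_lists ?V k. ?V - fun_vs.span (set xs))"
    by (simp add: indep_lists_Suc card_image)
  also have "\<dots> = (\<Sum>xs\<in>indep_lists ?V k. ?q ^ fun_vs.dim P - ?q ^ k)"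
    using finite_indep_lists_span[OF assms] fin_V by (simp add: card_SigmaI card_diff)
  also have "\<dots> = (\<Prod>i<Suc k. ?q ^ fun_vs.dim P - ?q ^ i)"
    using Suc.IH by simp
  finally show ?case .
qed

definition vec_to_fun :: "'a::zero vec \<Rightarrow> nat \<Rightarrow> 'a" where
  "vec_to_fun v = (\<lambda>i. if i < dim_vec v then v $ i else 0)"

lemma vec_to_fun_zero_vec [simp]: "vec_to_fun (0\<^sub>v n) = 0"
  by (simp add: vec_to_fun_def fun_eq_iff)

lemma vec_to_fun_inj_on: "inj_on vec_to_fun (carrier_vec n)"
proof
  fix v w :: "'a vec"
  assume v: "v \<in> carrier_vec n" and w: "w \<in> carrier_vec n" and eq: "vec_to_fun v = vec_to_fun w"
  show "v = w"
  proof (rule eq_vecI)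
    fix i assume "i < dim_vec w"
    then show "v $ i = w $ i" using fun_cong[OF eq, of i] v w by (simp add: vec_to_fun_def)
  qed (use v w in simp)
qed

context vec_space
begin

lemma vec_to_fun_lincomb:
  assumes "finite A" "A \<subseteq> carrier_vec n"
  shows "vec_to_fun (lincomb a A) = (\<Sum>x\<in>A. scale_fun (a x) (vec_to_fun x))"
proof
  fix i
  show "vec_to_fun (lincomb a A) i = (\<Sum>x\<in>A. scale_fun (a x) (vec_to_fun x)) i"
    using assms lincomb_index[of i A a]
    by (cases "i < n") (auto simp: vec_to_fun_def lincomb_dim sum_fun_apply scale_fun_apply
        intro!: sum.cong sum.neutral)
qed

lemma lin_dep_iff_dependent:
  assumes S: "S \<subseteq> carrier_vec n"
  shows "lin_dep S \<longleftrightarrow> fun_vs.dependent (vec_to_fun ` S)"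
proof
  assume "lin_dep S"
  then obtain A a v where A: "finite A" "A \<subseteq> S" "lincomb a A = 0\<^sub>v n" "v \<in> A" "a v \<noteq> 0"
    unfolding lin_dep_def by auto
  have AC: "A \<subseteq> carrier_vec n" using A(2) S by blast
  have inj: "inj_on vec_to_fun A" using vec_to_fun_inj_on AC by (rule inj_on_subset)
  define u where "u = a \<circ> the_inv_into A vec_to_fun"
  have "(\<Sum>f\<in>vec_to_fun ` A. scale_fun (u f) f) = (\<Sum>x\<in>A. scale_fun (a x) (vec_to_fun x))"
    by (simp add: sum.reindex[OF inj] u_def the_inv_into_f_f[OF inj])
  also have "\<dots> = 0"
    using vec_to_fun_lincomb[OF A(1) AC, of a] by (simp add: A(3))
  finally show "fun_vs.dependent (vec_to_fun ` S)"
    unfolding fun_vs.dependent_explicit using A inj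
    by (intro exI[of _ "vec_to_fun ` A"] exI[of _ u]) (auto simp: u_def the_inv_into_f_f)
next
  assume "fun_vs.dependent (vec_to_fun ` S)"
  then obtain t u where t: "finite t" "t \<subseteq> vec_to_fun ` S"
    "(\<Sum>f\<in>t. scale_fun (u f) f) = 0" "\<exists>f\<in>t. u f \<noteq> 0"
    unfolding fun_vs.dependent_explicit by blast
  obtain A where A: "A \<subseteq> S" "t = vec_to_fun ` A" using t(2) subset_imageE by metis
  have AC: "A \<subseteq> carrier_vec n" using A(1) S by blast
  have inj: "inj_on vec_to_fun A" using vec_to_fun_inj_on AC by (rule inj_on_subset)
  have fin: "finite A" using t(1) A(2) finite_image_iff[OF inj] by simp
  have "vec_to_fun (lincomb (u \<circ> vec_to_fun) A) = vec_to_fun (0\<^sub>v n)"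
    using t(3) by (simp add: vec_to_fun_lincomb[OF fin AC] A(2) sum.reindex[OF inj])
  then have "lincomb (u \<circ> vec_to_fun) A = 0\<^sub>v n"
    by (rule inj_onD[OF vec_to_fun_inj_on]) (use lincomb_closed[OF AC] in auto)
  then show "lin_dep S"
    unfolding lin_dep_def using fin A t(4)
    by (intro exI[of _ A] exI[of _ "u \<circ> vec_to_fun"]) auto
qed

lemma rank_eq_dim_cols:
  assumes A: "A \<in> carrier_mat n nc"
  shows "rank A = fun_vs.dim (vec_to_fun ` set (cols A))"
proof -
  let ?P = "\<lambda>T. T \<subseteq> set (cols A) \<and> lin_indpt T"
  have cols: "set (cols A) \<subseteq> carrier_vec n" using A cols_dim by blast
  have "lin_indpt {}" using lin_dep_iff_dependent[of "{}"] fun_vs.independent_empty by simp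
  then obtain S where S: "finite S" "maximal S ?P"
    using maximal_exists_superset[of "set (cols A)" ?P "{}"] by auto
  have SC: "S \<subseteq> set (cols A)" and indpt: "lin_indpt S" using S(2) unfolding maximal_def by auto
  have inj: "inj_on vec_to_fun S" using vec_to_fun_inj_on SC cols by (blast intro: inj_on_subset)
  have ind: "fun_vs.independent (vec_to_fun ` S)"
    using lin_dep_iff_dependent[of S] SC cols indpt by auto
  have "vec_to_fun c \<in> fun_vs.span (vec_to_fun ` S)" if c: "c \<in> set (cols A)" for c
  proof (cases "c \<in> S")
    case False
    then have "lin_dep (insert c S)" using S(2) SC c unfolding maximal_def by blast
    then have "fun_vs.dependent (insert (vec_to_fun c) (vec_to_fun ` S))"
      using lin_dep_iff_dependent[of "insert c S"] SC c cols by auto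
    moreover have "vec_to_fun c \<notin> vec_to_fun ` S"
      using False c SC cols vec_to_fun_inj_on unfolding inj_on_def by blast
    ultimately show ?thesis using ind fun_vs.independent_insert by metis
  qed (simp add: fun_vs.span_base)
  then have "card (vec_to_fun ` S) = fun_vs.dim (vec_to_fun ` set (cols A))"
    using SC ind by (intro fun_vs.basis_card_eq_dim) auto
  then show ?thesis using rank_card_indpt[OF A S(2)] card_image[OF inj] by simp
qed

end

lemma fun_vs_dim_rows_le_dim_cols:
  fixes g :: "nat \<Rightarrow> nat \<Rightarrow> 'a::field"
  shows "fun_vs.dim ((\<lambda>i j. if j < n then g i j else 0) ` {..<m})
       \<le> fun_vs.dim ((\<lambda>j i. if i < m then g i j else 0) ` {..<n})"
proof -
  define col where "col = (\<lambda>j i. if i < m then g i j else (0::'a))"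
  define row where "row = (\<lambda>i j. if j < n then g i j else (0::'a))"
  obtain B where B: "B \<subseteq> col ` {..<n}" "fun_vs.independent B" "col ` {..<n} \<subseteq> fun_vs.span B"
      "card B = fun_vs.dim (col ` {..<n})"
    using fun_vs.basis_exists by blast
  have fin: "finite B" using B(1) finite_subset by blast
  have "\<forall>j. \<exists>u. j < n \<longrightarrow> col j = (\<Sum>b\<in>B. scale_fun (u b) b)"
    using B(3) fun_vs.span_finite[OF fin] by blast
  then obtain U where U: "\<And>j. j < n \<Longrightarrow> col j = (\<Sum>b\<in>B. scale_fun (U j b) b)"
    by metis
  \<comment> \<open>The columns are combinations of the basis B, so the rows are combinations of the
    card B coefficient rows w b.\<close>
  define w where "w = (\<lambda>b j. if j < n then U j b else (0::'a))"
  have "row i = (\<Sum>b\<in>B. scale_fun (b i) (w b))" if "i < m" for i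
  proof
    fix j
    show "row i j = (\<Sum>b\<in>B. scale_fun (b i) (w b)) j"
      using fun_cong[OF U, of j i] that
      by (cases "j < n") (auto simp: row_def col_def w_def sum_fun_apply scale_fun_apply mult.commute)
  qed
  moreover have "(\<Sum>b\<in>B. scale_fun (b i) (w b)) \<in> fun_vs.span (w ` B)" for i
    by (intro fun_vs.span_sum fun_vs.span_scale fun_vs.span_base imageI)
  ultimately have "row ` {..<m} \<subseteq> fun_vs.span (w ` B)" by auto
  then have "fun_vs.dim (row ` {..<m}) \<le> card (w ` B)"
    by (rule fun_vs.dim_le_card) (use fin in auto)
  also have "\<dots> \<le> card B" using fin by (rule card_image_le)
  finally show ?thesis using B(4) unfolding row_def col_def by simp
qed

definition row_funs :: "'a::zero mat \<Rightarrow> (nat \<Rightarrow> 'a) set" where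
  "row_funs A = (\<lambda>i j. if j < dim_col A then A $$ (i, j) else 0) ` {..<dim_row A}"

lemma finite_row_funs: "finite (row_funs A)"
  by (simp add: row_funs_def)

lemma rk_eq_dim_row_funs:
  fixes A :: "'a::field mat"
  assumes A: "A \<in> carrier_mat m n"
  shows "rk m A = fun_vs.dim (row_funs A)"
proof -
  have "vec_to_fun ` set (cols A) = (\<lambda>j i. if i < m then A $$ (i, j) else 0) ` {..<n}"
    using A by (force simp: cols_def vec_to_fun_def)
  then have "rk m A = fun_vs.dim ((\<lambda>j i. if i < m then A $$ (i, j) else 0) ` {..<n})"
    unfolding rk_def using vec_space.rank_eq_dim_cols[OF A] by simp
  also have "\<dots> = fun_vs.dim (row_funs A)"
    using fun_vs_dim_rows_le_dim_cols[of n "\<lambda>i j. A $$ (i, j)" m]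
      fun_vs_dim_rows_le_dim_cols[of m "\<lambda>j i. A $$ (i, j)" n] A
    unfolding row_funs_def by simp
  finally show ?thesis .
qed

lemma dim_row_funs_one_mat: "fun_vs.dim (row_funs (1\<^sub>m n :: 'a::field mat)) = n"
  using rk_eq_dim_row_funs[of "1\<^sub>m n :: 'a mat" n n] vec_space.det_rank_iff[of "1\<^sub>m n :: 'a mat" n]
  by (simp add: rk_def)

lemma span_row_funs_subset_one_mat:
  fixes A :: "'a::field mat"
  assumes A: "A \<in> carrier_mat m n"
  shows "fun_vs.span (row_funs A) \<subseteq> fun_vs.span (row_funs (1\<^sub>m n))"
proof (rule fun_vs.span_minimal[OF _ fun_vs.subspace_span], rule subsetI)
  let ?e = "\<lambda>i j. if j < n then (1\<^sub>m n :: 'a mat) $$ (i, j) else 0"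
  fix f assume "f \<in> row_funs A"
  then obtain i where f: "f = (\<lambda>j. if j < n then A $$ (i, j) else 0)"
    using A by (auto simp: row_funs_def)
  have "f = (\<Sum>l<n. scale_fun (f l) (?e l))"
  proof
    fix j
    show "f j = (\<Sum>l<n. scale_fun (f l) (?e l)) j"
    proof (cases "j < n")
      case True
      have "(\<Sum>l<n. scale_fun (f l) (?e l)) j = (\<Sum>l<n. if l = j then f l else 0)"
        unfolding sum_fun_apply scale_fun_apply using True by (intro sum.cong) auto
      also have "\<dots> = f j" using True by simp
      finally show ?thesis by simp
    qed (simp add: f sum_fun_apply scale_fun_apply)
  qed
  also have "\<dots> \<in> fun_vs.span (row_funs (1\<^sub>m n))"
    by (intro fun_vs.span_sum fun_vs.span_scale fun_vs.span_base) (auto simp: row_funs_def)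
  finally show "f \<in> fun_vs.span (row_funs (1\<^sub>m n))" .
qed

lemma row_funs_diff_subset_span:
  fixes A B R :: "'a::field mat"
  assumes "A \<in> carrier_mat m n" "B \<in> carrier_mat m n" "R \<in> carrier_mat m n"
  shows "row_funs (A - B) \<subseteq> fun_vs.span (row_funs (A - R) \<union> row_funs (B - R))"
proof
  fix f assume "f \<in> row_funs (A - B)"
  then obtain i where i: "i < m" and f: "f = (\<lambda>j. if j < n then (A - B) $$ (i, j) else 0)"
    using assms unfolding row_funs_def by auto
  let ?a = "\<lambda>j. if j < n then (A - R) $$ (i, j) else 0"
  let ?b = "\<lambda>j. if j < n then (B - R) $$ (i, j) else 0"
  have "?a \<in> row_funs (A - R)" "?b \<in> row_funs (B - R)"
    using assms i unfolding row_funs_def by auto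
  then have "?a - ?b \<in> fun_vs.span (row_funs (A - R) \<union> row_funs (B - R))"
    by (intro fun_vs.span_diff fun_vs.span_base) auto
  moreover have "f = ?a - ?b"
    using assms i by (auto simp: f fun_eq_iff)
  ultimately show "f \<in> fun_vs.span (row_funs (A - R) \<union> row_funs (B - R))" by simp
qed

lemma rk_diff_plus_card_common_le:
  fixes A B R :: "'a::field mat"
  assumes "A \<in> carrier_mat m n" "B \<in> carrier_mat m n" "R \<in> carrier_mat m n"
    and "X \<subseteq> fun_vs.span (row_funs (A - R))" "X \<subseteq> fun_vs.span (row_funs (B - R))"
    and "fun_vs.independent X"
  shows "rk m (A - B) + card X \<le> rk m (A - R) + rk m (B - R)"
proof -
  have "A - B \<in> carrier_mat m n" "A - R \<in> carrier_mat m n" "B - R \<in> carrier_mat m n"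
    using assms(1-3) by auto
  then show ?thesis
    using fun_vs_dim_plus_card_common_le[OF finite_row_funs finite_row_funs assms(4-6)
        row_funs_diff_subset_span[OF assms(1-3)]]
    by (simp add: rk_eq_dim_row_funs)
qed

lemma rk_diff_le:
  fixes A B R :: "'a::field mat"
  assumes "A \<in> carrier_mat m n" "B \<in> carrier_mat m n" "R \<in> carrier_mat m n"
  shows "rk m (A - B) \<le> rk m (A - R) + rk m (B - R)"
  using rk_diff_plus_card_common_le[OF assms, of "{}"] fun_vs.independent_empty by simp

lemma prod_one_minus_power_ge_aux:
  fixes x :: real
  assumes x: "0 \<le> x" "x \<le> 1/2" and "0 < k"
  shows "1/4 + x ^ k / 2 \<le> (\<Prod>i<k. 1 - x ^ Suc i)"
  using \<open>0 < k\<close>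
proof (induction k rule: nat_induct_non_zero)
  case 1
  then show ?case using x by simp
next
  case (Suc k)
  \<comment> \<open>The bound 1/4 alone is not inductive; the extra term x ^ k / 2 pays for the next factor.\<close>
  define y where "y = x ^ k"
  have y: "0 \<le> y" "y \<le> 1/2"
    using x power_decreasing[of 1 k x] \<open>0 < k\<close> by (auto simp: y_def)
  have "x * y \<le> 1/4" using mult_mono[OF x(2) y(2)] x y by simp
  then have "0 \<le> y * (1/2 - 3*x/4 - x*y/2)" using x y by simp
  moreover have "(1/4 + y/2) * (1 - x * y) - (1/4 + x * y / 2) = y * (1/2 - 3*x/4 - x*y/2)"
    by (simp add: field_simps)
  ultimately have "1/4 + x * y / 2 \<le> (1/4 + y/2) * (1 - x * y)" by linarith
  also have "\<dots> = (1/4 + x ^ k / 2) * (1 - x ^ Suc k)" by (simp add: y_def)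
  also have "\<dots> \<le> (\<Prod>i<k. 1 - x ^ Suc i) * (1 - x ^ Suc k)"
    using Suc.IH x power_le_one[of x "Suc k"] by (intro mult_right_mono) auto
  finally show ?case by (simp add: y_def)
qed

lemma prod_one_minus_power_ge:
  fixes x :: real
  assumes "0 \<le> x" "x \<le> 1/2"
  shows "1/4 \<le> (\<Prod>i<k. 1 - x ^ Suc i)"
proof (cases "k = 0")
  case False
  then show ?thesis
    using prod_one_minus_power_ge_aux[OF assms, of k] zero_le_power[OF assms(1), of k] by simp
qed simp

lemma prod_power_diff_ratio_le:
  fixes q :: real
  assumes q: "2 \<le> q" and "k \<le> t" "t \<le> n"
  shows "(\<Prod>i<k. q ^ n - q ^ i) / (\<Prod>i<k. q ^ t - q ^ i) \<le> 4 * q ^ (k * (n - t))"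
proof -
  define x where "x = 1 / q"
  have x: "0 \<le> x" "x \<le> 1/2" using q by (auto simp: x_def field_simps)
  have factor: "q ^ t - q ^ i = q ^ t * (1 - x ^ (t - i))" if "i \<le> t" for i
  proof -
    have "q ^ t * x ^ (t - i) = q ^ i"
      using that q by (simp add: x_def power_divide power_diff)
    then show ?thesis by (simp add: right_diff_distrib)
  qed
  have "(\<Prod>i<k. 1 - x ^ Suc i) = (\<Prod>i<k. 1 - x ^ (k - i))"
    by (subst prod.nat_diff_reindex[symmetric]) (simp add: Suc_diff_Suc)
  also have "\<dots> \<le> (\<Prod>i<k. 1 - x ^ (t - i))"
    using assms x by (intro prod_mono) (auto intro!: power_decreasing power_le_one)
  finally have quarter: "1/4 \<le> (\<Prod>i<k. 1 - x ^ (t - i))"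
    using prod_one_minus_power_ge[OF x, of k] by linarith
  have "(\<Prod>i<k. q ^ t - q ^ i) = (\<Prod>i<k. q ^ t * (1 - x ^ (t - i)))"
    using assms by (intro prod.cong) (auto simp: factor)
  also have "\<dots> = q ^ (t * k) * (\<Prod>i<k. 1 - x ^ (t - i))"
    by (simp add: prod.distrib power_mult)
  finally have den: "(\<Prod>i<k. q ^ t - q ^ i) = q ^ (t * k) * (\<Prod>i<k. 1 - x ^ (t - i))" .
  have "(\<Prod>i<k. q ^ n - q ^ i) \<le> (\<Prod>i<k. q ^ n)"
    using assms by (intro prod_mono) (auto intro: power_increasing)
  also have "\<dots> = q ^ (n * k)" by (simp add: power_mult)
  also have "\<dots> = q ^ (t * k) * q ^ (k * (n - t))"
    using assms by (simp add: power_add[symmetric] algebra_simps diff_mult_distrib2)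
  finally have num: "(\<Prod>i<k. q ^ n - q ^ i) \<le> q ^ (t * k) * q ^ (k * (n - t))" .
  have "(\<Prod>i<k. q ^ n - q ^ i) / (\<Prod>i<k. q ^ t - q ^ i)
      \<le> q ^ (t * k) * q ^ (k * (n - t)) / (q ^ (t * k) * (1/4))"
    unfolding den using q quarter num by (intro frac_le mult_left_mono) auto
  also have "\<dots> = 4 * q ^ (k * (n - t))" using q by simp
  finally show ?thesis .
qed

lemma gauss_binom_ratio_eq:
  assumes q: "2 \<le> q" and "k \<le> t"
  shows "gauss_binom q n k / gauss_binom q t k
       = (\<Prod>i<k. real q ^ n - real q ^ i) / (\<Prod>i<k. real q ^ t - real q ^ i)"
proof -
  have "0 < (\<Prod>i<k. real q ^ j - real q ^ i)" if "k \<le> j" for j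
    using q that by (intro prod_pos) (auto intro: power_strict_increasing)
  then have "(\<Prod>i<k. real q ^ k - real q ^ i) \<noteq> 0" "(\<Prod>i<k. real q ^ t - real q ^ i) \<noteq> 0"
    using \<open>k \<le> t\<close> by (metis order_refl less_irrefl)+
  then show ?thesis unfolding gauss_binom_def prod_dividef by (simp add: field_simps)
qed

lemma gauss_binom_ratio_le:
  assumes "2 \<le> q" "k \<le> t" "t \<le> n"
  shows "gauss_binom q n k / gauss_binom q t k \<le> 4 * real q ^ (k * (n - t))"
  using gauss_binom_ratio_eq[of q k t n] prod_power_diff_ratio_le[of "real q" k t n] assms by simp

lemma of_nat_prod_power_diff:
  assumes "1 \<le> q" "k \<le> t"
  shows "real (\<Prod>i<k. q ^ t - q ^ i) = (\<Prod>i<k. real q ^ t - real q ^ i)"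
proof -
  have "q ^ i \<le> q ^ t" if "i < k" for i using that assms by (intro power_increasing) auto
  then show ?thesis by (auto simp: of_nat_prod of_nat_diff intro!: prod.cong)
qed

lemma card_mult_le_card_if_disjoint:
  assumes "finite U" "\<And>c. c \<in> S \<Longrightarrow> F c \<subseteq> U" "\<And>c. c \<in> S \<Longrightarrow> card (F c) = p"
    and "disjoint_family_on F S"
  shows "card S * p \<le> card U"
proof (cases "finite S")
  case True
  have fin: "finite (F c)" if "c \<in> S" for c using finite_subset[OF assms(2)[OF that] assms(1)] .
  have "card S * p = (\<Sum>c\<in>S. card (F c))" using assms(3) by simp
  also have "\<dots> = card (\<Union>c\<in>S. F c)"
    using True fin assms(4) by (intro card_UN_disjoint[symmetric]) (auto simp: disjoint_family_on_def)
  also have "\<dots> \<le> card U" using assms(1,2) by (intro card_mono) auto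
  finally show ?thesis .
qed simp

lemma finite_carrier_mat: "finite (carrier_mat m n :: 'a::finite mat set)"
proof -
  let ?I = "{..<m} \<times> {..<n}"
  have "carrier_mat m n \<subseteq> (\<lambda>f. mat m n f) ` (?I \<rightarrow>\<^sub>E (UNIV :: 'a set))"
  proof
    fix A :: "'a mat" assume "A \<in> carrier_mat m n"
    then have "A = mat m n (restrict (\<lambda>ij. A $$ ij) ?I)" by (intro eq_matI) auto
    moreover have "restrict (\<lambda>ij. A $$ ij) ?I \<in> ?I \<rightarrow>\<^sub>E UNIV" by simp
    ultimately show "A \<in> (\<lambda>f. mat m n f) ` (?I \<rightarrow>\<^sub>E UNIV)" by (rule image_eqI)
  qed
  then show ?thesis by (rule finite_subset) (intro finite_imageI finite_PiE; simp)
qed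

lemma card_code_close_le_1:
  fixes C :: "'a::field mat set"
  assumes C: "C \<subseteq> carrier_mat m n" and r: "r \<in> carrier_mat m n"
    and dist: "\<forall>c1\<in>C. \<forall>c2\<in>C. c1 \<noteq> c2 \<longrightarrow> d \<le> rank_dist m c1 c2"
    and "2 * f < d"
  shows "card {c \<in> C. rk m (c - r) \<le> f} \<le> 1"
proof -
  have "c1 = c2" if "c1 \<in> C" "c2 \<in> C" "rk m (c1 - r) \<le> f" "rk m (c2 - r) \<le> f" for c1 c2
  proof (rule ccontr)
    assume "c1 \<noteq> c2"
    then have "d \<le> rk m (c1 - c2)" using dist that(1,2) by (auto simp: rank_dist_def)
    also have "\<dots> \<le> rk m (c1 - r) + rk m (c2 - r)" using that(1,2) C r by (intro rk_diff_le) auto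
    finally show False using that(3,4) \<open>2 * f < d\<close> by linarith
  qed
  then have singleton: "{c \<in> C. rk m (c - r) \<le> f} \<subseteq> {c}" if "c \<in> C" "rk m (c - r) \<le> f" for c
    using that by blast
  show ?thesis
  proof (cases "{c \<in> C. rk m (c - r) \<le> f} = {}")
    case False
    then obtain c where "c \<in> C" "rk m (c - r) \<le> f" by blast
    then have "card {c \<in> C. rk m (c - r) \<le> f} \<le> card {c}" by (intro card_mono singleton) auto
    then show ?thesis by simp
  next
    case True
    show ?thesis unfolding True by simp
  qed
qed

lemma indep_lists_row_spaces_disjoint:
  fixes A B R :: "'a::field mat"
  assumes "A \<in> carrier_mat m n" "B \<in> carrier_mat m n" "R \<in> carrier_mat m n"
    and "rk m (A - R) + rk m (B - R) < rk m (A - B) + k"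
  shows "indep_lists (fun_vs.span (row_funs (A - R))) k
           \<inter> indep_lists (fun_vs.span (row_funs (B - R))) k = {}"
proof (rule ccontr)
  assume "indep_lists (fun_vs.span (row_funs (A - R))) k
           \<inter> indep_lists (fun_vs.span (row_funs (B - R))) k \<noteq> {}"
  then obtain xs where "xs \<in> indep_lists (fun_vs.span (row_funs (A - R))) k"
    "xs \<in> indep_lists (fun_vs.span (row_funs (B - R))) k" by blast
  then have xs: "set xs \<subseteq> fun_vs.span (row_funs (A - R))" "set xs \<subseteq> fun_vs.span (row_funs (B - R))"
    "fun_vs.independent (set xs)" "card (set xs) = k"
    unfolding indep_lists_def by (auto simp: distinct_card)
  have "rk m (A - B) + card (set xs) \<le> rk m (A - R) + rk m (B - R)"
    by (rule rk_diff_plus_card_common_le[OF assms(1-3) xs(1-3)])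
  with xs(4) assms(4) show False by linarith
qed

lemma card_code_at_rank_distance_le:
  fixes C :: "'a::{field,finite} mat set"
  assumes C: "C \<subseteq> carrier_mat m n" and r: "r \<in> carrier_mat m n"
    and dist: "\<forall>c1\<in>C. \<forall>c2\<in>C. c1 \<noteq> c2 \<longrightarrow> d \<le> rank_dist m c1 c2"
    and t: "d \<le> 2 * t + 1" "t < d" "d \<le> n"
  shows "real (card {c \<in> C. rk m (c - r) = t})
           \<le> gauss_binom (card (UNIV :: 'a set)) n (2 * t + 1 - d)
               / gauss_binom (card (UNIV :: 'a set)) t (2 * t + 1 - d)"
proof -
  define q where "q = card (UNIV :: 'a set)"
  define k where "k = 2 * t + 1 - d"
  define S where "S = {c \<in> C. rk m (c - r) = t}"
  define frames where "frames c = indep_lists (fun_vs.span (row_funs (c - r))) k" for c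
  have q: "2 \<le> q" unfolding q_def by (rule two_le_card_field)
  have k: "k \<le> t" "t \<le> n" using t by (auto simp: k_def)
  have diff_carrier: "c - r \<in> carrier_mat m n" if "c \<in> S" for c using that C r by (auto simp: S_def)
  have "card (frames c) = (\<Prod>i<k. q ^ t - q ^ i)" if "c \<in> S" for c
    using card_indep_lists[OF finite_row_funs, of "c - r" k] that
      rk_eq_dim_row_funs[OF diff_carrier[OF that]]
    by (simp add: frames_def q_def S_def)
  moreover have "frames c \<subseteq> indep_lists (fun_vs.span (row_funs (1\<^sub>m n :: 'a mat))) k" if "c \<in> S" for c
    unfolding frames_def by (rule indep_lists_mono[OF span_row_funs_subset_one_mat[OF diff_carrier[OF that]]])
  moreover have "disjoint_family_on frames S"
    unfolding disjoint_family_on_def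
  proof (intro ballI impI)
    fix c1 c2 assume c: "c1 \<in> S" "c2 \<in> S" "c1 \<noteq> c2"
    then have "d \<le> rk m (c1 - c2)" using dist by (auto simp: S_def rank_dist_def)
    then show "frames c1 \<inter> frames c2 = {}"
      unfolding frames_def using c C r t
      by (intro indep_lists_row_spaces_disjoint[of _ m n]) (auto simp: S_def k_def)
  qed
  ultimately have "card S * (\<Prod>i<k. q ^ t - q ^ i)
      \<le> card (indep_lists (fun_vs.span (row_funs (1\<^sub>m n :: 'a mat))) k)"
    by (intro card_mult_le_card_if_disjoint finite_indep_lists_span finite_row_funs)
  also have "\<dots> = (\<Prod>i<k. q ^ n - q ^ i)"
    using card_indep_lists[OF finite_row_funs, of "1\<^sub>m n :: 'a mat" k]
    by (simp add: dim_row_funs_one_mat q_def)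
  finally have "real (card S) * real (\<Prod>i<k. q ^ t - q ^ i) \<le> real (\<Prod>i<k. q ^ n - q ^ i)"
    by (metis of_nat_le_iff of_nat_mult)
  then have "real (card S) * (\<Prod>i<k. real q ^ t - real q ^ i) \<le> (\<Prod>i<k. real q ^ n - real q ^ i)"
    using k q of_nat_prod_power_diff[of q k t] of_nat_prod_power_diff[of q k n] by simp
  moreover have "0 < (\<Prod>i<k. real q ^ t - real q ^ i)"
    using k q by (intro prod_pos) (auto intro: power_strict_increasing)
  ultimately have "real (card S) \<le> (\<Prod>i<k. real q ^ n - real q ^ i) / (\<Prod>i<k. real q ^ t - real q ^ i)"
    by (simp add: pos_le_divide_eq)
  also have "\<dots> = gauss_binom q n k / gauss_binom q t k"
    by (rule gauss_binom_ratio_eq[OF q k(1), symmetric])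
  finally show ?thesis unfolding S_def q_def k_def .
qed

lemma card_code_inter_rank_ball_le:
  fixes C :: "'a::{field,finite} mat set"
  assumes C: "C \<subseteq> carrier_mat m n" and r: "r \<in> carrier_mat m n"
    and dist: "\<forall>c1\<in>C. \<forall>c2\<in>C. c1 \<noteq> c2 \<longrightarrow> d \<le> rank_dist m c1 c2"
    and "\<tau> < d" "d \<le> n"
  shows "real (card (C \<inter> rank_ball m n \<tau> r))
           \<le> 1 + (\<Sum>t = (d - 1) div 2 + 1..\<tau>.
                    gauss_binom (card (UNIV :: 'a set)) n (2 * t + 1 - d)
                    / gauss_binom (card (UNIV :: 'a set)) t (2 * t + 1 - d))"
proof -
  define f where "f = (d - 1) div 2"
  define close where "close = {c \<in> C. rk m (c - r) \<le> f}"
  define sphere where "sphere t = {c \<in> C. rk m (c - r) = t}" for t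
  have fin: "finite C" using finite_carrier_mat C by (rule rev_finite_subset)
  have "C \<inter> rank_ball m n \<tau> r \<subseteq> close \<union> (\<Union>t\<in>{f + 1..\<tau>}. sphere t)"
    by (auto simp: rank_ball_def rank_dist_def close_def sphere_def)
  then have "card (C \<inter> rank_ball m n \<tau> r) \<le> card (close \<union> (\<Union>t\<in>{f + 1..\<tau>}. sphere t))"
    using fin by (intro card_mono) (auto simp: close_def sphere_def)
  also have "\<dots> \<le> card close + (\<Sum>t = f + 1..\<tau>. card (sphere t))"
    using card_Un_le card_UN_le[of "{f + 1..\<tau>}" sphere]
    by (meson add_left_mono finite_atLeastAtMost order_trans)
  finally have "real (card (C \<inter> rank_ball m n \<tau> r))
      \<le> real (card close) + (\<Sum>t = f + 1..\<tau>. real (card (sphere t)))"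
    by (metis of_nat_add of_nat_le_iff of_nat_sum)
  moreover have "card close \<le> 1"
    unfolding close_def using assms by (intro card_code_close_le_1) (auto simp: f_def)
  moreover have "(\<Sum>t = f + 1..\<tau>. real (card (sphere t)))
      \<le> (\<Sum>t = f + 1..\<tau>. gauss_binom (card (UNIV :: 'a set)) n (2 * t + 1 - d)
                    / gauss_binom (card (UNIV :: 'a set)) t (2 * t + 1 - d))"
    unfolding sphere_def using assms
    by (intro sum_mono card_code_at_rank_distance_le) (auto simp: f_def)
  ultimately show ?thesis
    unfolding f_def by linarith
qed

theorem theorem2:
  fixes C :: "'a::{field,finite} mat set"
    and q d \<tau> n m :: nat
  assumes q_def: "q = card (UNIV :: 'a set)"
    and range: "(d - 1) div 2 \<le> \<tau>" "\<tau> < d" "d \<le> n" "n \<le> m"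
    and C_sub: "C \<subseteq> carrier_mat m n"
    and C_dist: "min_rank_distance m C d"
  shows "real (Max {card (C \<inter> rank_ball m n \<tau> r) | r. r \<in> carrier_mat m n})
           \<le> 1 + (\<Sum>t = (d - 1) div 2 + 1..\<tau>.
                    gauss_binom q n (2 * t + 1 - d) / gauss_binom q t (2 * t + 1 - d))
  \<and> 1 + (\<Sum>t = (d - 1) div 2 + 1..\<tau>.
                    gauss_binom q n (2 * t + 1 - d) / gauss_binom q t (2 * t + 1 - d))
           \<le> 1 + 4 * (\<Sum>t = (d - 1) div 2 + 1..\<tau>. real q ^ ((2 * t + 1 - d) * (n - t)))
  \<and> 1 + 4 * (\<Sum>t = (d - 1) div 2 + 1..\<tau>. real q ^ ((2 * t + 1 - d) * (n - t)))
           \<le> 1 + 4 * real (\<tau> - (d - 1) div 2)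
                 * real q ^ ((2 * \<tau> + 1 - d) * (n - (d - 1) div 2 - 1))"
proof -
  define f where "f = (d - 1) div 2"
  have q: "2 \<le> q" unfolding q_def by (rule two_le_card_field)
  have dist: "\<forall>c1\<in>C. \<forall>c2\<in>C. c1 \<noteq> c2 \<longrightarrow> d \<le> rank_dist m c1 c2"
    using C_dist unfolding min_rank_distance_def by blast
  let ?sizes = "(\<lambda>r. card (C \<inter> rank_ball m n \<tau> r)) ` carrier_mat m n"
  have "Max ?sizes \<in> ?sizes"
    using zero_carrier_mat[of m n] by (intro Max_in finite_imageI finite_carrier_mat) blast
  moreover have "{card (C \<inter> rank_ball m n \<tau> r) | r. r \<in> carrier_mat m n} = ?sizes" by blast
  ultimately obtain r where r: "r \<in> carrier_mat m n" and max:
      "Max {card (C \<inter> rank_ball m n \<tau> r) | r. r \<in> carrier_mat m n} = card (C \<inter> rank_ball m n \<tau> r)"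
    by auto
  have "(\<Sum>t = f + 1..\<tau>. gauss_binom q n (2 * t + 1 - d) / gauss_binom q t (2 * t + 1 - d))
      \<le> (\<Sum>t = f + 1..\<tau>. 4 * real q ^ ((2 * t + 1 - d) * (n - t)))"
    using q range by (intro sum_mono gauss_binom_ratio_le) (auto simp: f_def)
  then have ratios:
    "(\<Sum>t = f + 1..\<tau>. gauss_binom q n (2 * t + 1 - d) / gauss_binom q t (2 * t + 1 - d))
      \<le> 4 * (\<Sum>t = f + 1..\<tau>. real q ^ ((2 * t + 1 - d) * (n - t)))"
    by (simp add: sum_distrib_left)
  have "(\<Sum>t = f + 1..\<tau>. real q ^ ((2 * t + 1 - d) * (n - t)))
      \<le> real (card {f + 1..\<tau>}) * real q ^ ((2 * \<tau> + 1 - d) * (n - f - 1))"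
    using q by (intro sum_bounded_above power_increasing mult_le_mono) auto
  then have powers: "4 * (\<Sum>t = f + 1..\<tau>. real q ^ ((2 * t + 1 - d) * (n - t)))
      \<le> 4 * real (\<tau> - f) * real q ^ ((2 * \<tau> + 1 - d) * (n - f - 1))" by simp
  show ?thesis
    using card_code_inter_rank_ball_le[OF C_sub r dist range(2,3)] max ratios powers
    unfolding q_def f_def by simp
qed

end
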